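(* Let $\|\cdot\|$ be a norm on $\mathbb{C}^n$. There exists a sequence, indexed by positive integers $d$, of functions \[F_{2d}(z):=\sum_{i=1}^{N(2d)} w_i |\langle z,y_i\rangle|^{2d},\] with $N(2d)\in\mathbb{N}$, points $y_i\in\mathbb{C}^n$ and real positive weights $w_i$, such that: (1) $n_{2d}(z):=F_{2d}(z)^{1/(2d)}$ is a norm on $\mathbb{C}^n$; (2) $n_{2d}(z)\leq\|z\|$ for all $z\in\mathbb{C}^n$; (3) $n_{2d}(z)$ converges to $\|z\|$ as $d\to\infty$, uniformly on compact subsets of $\mathbb{C}^n$.
   Context: A norm on $\mathbb{C}^n$ is a complex norm, i.e. it satisfies $\|\lambda z\|=|\lambda|\|z\|$ for all complex $\lambda$. $\langle z,y\rangle$ denotes the standard Hermitian inner product on $\mathbb{C}^n$. *)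

theory Defs
  imports "HOL-Analysis.Analysis"
begin

definition herm_inner :: "complex ^ 'n \<Rightarrow> complex ^ 'n \<Rightarrow> complex" where
  "herm_inner z y = (\<Sum>i\<in>UNIV. z $ i * cnj (y $ i))"

definition is_cnorm :: "(complex ^ 'n \<Rightarrow> real) \<Rightarrow> bool" where
  "is_cnorm N \<longleftrightarrow>
     (\<forall>z. 0 \<le> N z) \<and>
     (\<forall>z. N z = 0 \<longleftrightarrow> z = 0) \<and>
     (\<forall>z w. N (z + w) \<le> N z + N w) \<and>
     (\<forall>c z. N (c *s z) = cmod c * N z)"

end

theory Submission
  imports Defs "HOL-Real_Asymp.Real_Asymp"
begin

text \<open>
  By the separating hyperplane theorem, \<open>\<parallel>z\<parallel>\<close> is the supremum of \<open>|\<langle>z,y\<rangle>|\<close> over the dual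
  unit ball \<open>{y. \<forall>x. |\<langle>x,y\<rangle>| \<le> \<parallel>x\<parallel>}\<close>. Compactness of the unit sphere turns this, for every
  \<open>r < 1\<close>, into finitely many dual vectors \<open>y\<^sub>1, \<dots>, y\<^sub>M\<close> with \<open>max\<^sub>i |\<langle>z,y\<^sub>i\<rangle>| \<ge> r \<parallel>z\<parallel>\<close>.
  The power mean \<open>(M\<^sup>-\<^sup>1 \<Sum>\<^sub>i |\<langle>z,y\<^sub>i\<rangle>|\<^bsup>2d\<^esup>)\<^bsup>1/2d\<^esup>\<close> is a norm by Minkowski's inequality and lies
  between \<open>M\<^bsup>-1/2d\<^esup> r \<parallel>z\<parallel>\<close> and \<open>\<parallel>z\<parallel>\<close>. Taking \<open>r\<^sub>k \<rightarrow> 1\<close> and, in degree \<open>2d\<close>, the last family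
  with \<open>M\<^sub>k \<le> d\<close>, the factor \<open>M\<^bsup>-1/2d\<^esup> \<ge> d\<^bsup>-1/2d\<^esup>\<close> tends to \<open>1\<close> as well.
\<close>

lemma herm_inner_add_left: "herm_inner (z + v) y = herm_inner z y + herm_inner v y"
  unfolding herm_inner_def by (simp add: distrib_right sum.distrib)

lemma herm_inner_scale_left: "herm_inner (c *s z) y = c * herm_inner z y"
  unfolding herm_inner_def by (simp add: sum_distrib_left mult.assoc)

lemma scaleR_eq_scale_of_real: "r *\<^sub>R (z :: complex ^ 'n) = of_real r *s z"
  by (simp add: vec_eq_iff) (simp add: scaleR_conv_of_real)

lemma herm_inner_scaleR_left: "herm_inner (r *\<^sub>R z) y = of_real r * herm_inner z y"
  by (simp add: scaleR_eq_scale_of_real herm_inner_scale_left)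

lemma herm_inner_zero_left [simp]: "herm_inner 0 y = 0"
  unfolding herm_inner_def by simp

lemma inner_eq_Re_herm_inner: "inner z y = Re (herm_inner z y)"
  unfolding herm_inner_def inner_vec_def inner_complex_def by simp

lemma continuous_on_herm_inner_left: "continuous_on UNIV (\<lambda>z. herm_inner z y)"
  unfolding herm_inner_def by (intro continuous_intros)

lemma convex_on_power_nonneg: "convex_on {0::real..} (\<lambda>x. x ^ n)"
  by (cases "even n") (auto intro: convex_on_subset convex_power_even convex_power_odd)

lemma power_sum_eq_if_power_sum_zero:
  fixes a b w :: "'i \<Rightarrow> real"
  assumes "finite I" "0 < p" "\<And>i. i \<in> I \<Longrightarrow> 0 \<le> w i" "\<And>i. i \<in> I \<Longrightarrow> 0 \<le> a i"
    and "(\<Sum>i\<in>I. w i * a i ^ p) = 0"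
  shows "(\<Sum>i\<in>I. w i * (a i + b i) ^ p) = (\<Sum>i\<in>I. w i * b i ^ p)"
proof (rule sum.cong)
  fix i assume "i \<in> I"
  then have "w i * a i ^ p = 0"
    using assms sum_nonneg_eq_0_iff[of I "\<lambda>i. w i * a i ^ p"] by simp
  then show "w i * (a i + b i) ^ p = w i * b i ^ p"
    using \<open>0 < p\<close> by auto
qed simp

lemma power_sum_add_le_power_add:
  fixes a b w :: "'i \<Rightarrow> real"
  assumes w: "\<And>i. i \<in> I \<Longrightarrow> 0 \<le> w i"
    and a: "\<And>i. i \<in> I \<Longrightarrow> 0 \<le> a i" and b: "\<And>i. i \<in> I \<Longrightarrow> 0 \<le> b i"
    and A: "0 < A" "(\<Sum>i\<in>I. w i * a i ^ p) = A ^ p"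
    and B: "0 < B" "(\<Sum>i\<in>I. w i * b i ^ p) = B ^ p"
  shows "(\<Sum>i\<in>I. w i * (a i + b i) ^ p) \<le> (A + B) ^ p"
proof -
  define t where "t = B / (A + B)"
  have t: "0 \<le> t" "t \<le> 1" "1 - t = A / (A + B)"
    using A B by (auto simp: t_def field_simps)
  have convex: "((a i + b i) / (A + B)) ^ p \<le> (1 - t) * (a i / A) ^ p + t * (b i / B) ^ p"
    if "i \<in> I" for i
  proof -
    have "(1 - t) * (a i / A) = a i / (A + B)"
      using A B by (simp add: t(3))
    moreover have "t * (b i / B) = b i / (A + B)"
      using A B by (simp add: t_def)
    ultimately have "(a i + b i) / (A + B) = (1 - t) *\<^sub>R (a i / A) + t *\<^sub>R (b i / B)"
      unfolding scaleR_conv_of_real of_real_eq_id id_def by (simp add: add_divide_distrib)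
    then show ?thesis
      using convex_onD[OF convex_on_power_nonneg, of t "a i / A" "b i / B"] t A B a b that
      by simp
  qed
  have "(\<Sum>i\<in>I. w i * (a i + b i) ^ p) / (A + B) ^ p
          = (\<Sum>i\<in>I. w i * ((a i + b i) / (A + B)) ^ p)"
    by (simp add: sum_divide_distrib power_divide)
  also have "\<dots> \<le> (\<Sum>i\<in>I. w i * ((1 - t) * (a i / A) ^ p + t * (b i / B) ^ p))"
    using convex w by (intro sum_mono mult_left_mono) auto
  also have "\<dots> = (1 - t) * ((\<Sum>i\<in>I. w i * a i ^ p) / A ^ p) + t * ((\<Sum>i\<in>I. w i * b i ^ p) / B ^ p)"
    by (simp add: sum.distrib sum_distrib_left sum_divide_distrib power_divide algebra_simps)
  also have "\<dots> = 1"
    using A B by simp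
  finally show ?thesis
    using A B by simp
qed

lemma root_power_sum_triangle:
  fixes a b w :: "'i \<Rightarrow> real"
  assumes fin: "finite I" and p: "0 < p"
    and w: "\<And>i. i \<in> I \<Longrightarrow> 0 \<le> w i"
    and a: "\<And>i. i \<in> I \<Longrightarrow> 0 \<le> a i" and b: "\<And>i. i \<in> I \<Longrightarrow> 0 \<le> b i"
  shows "root p (\<Sum>i\<in>I. w i * (a i + b i) ^ p)
           \<le> root p (\<Sum>i\<in>I. w i * a i ^ p) + root p (\<Sum>i\<in>I. w i * b i ^ p)"
proof -
  define SA where "SA = (\<Sum>i\<in>I. w i * a i ^ p)"
  define SB where "SB = (\<Sum>i\<in>I. w i * b i ^ p)"
  define A where "A = root p SA"
  define B where "B = root p SB"
  have "0 \<le> SA" "0 \<le> SB"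
    unfolding SA_def SB_def using w a b by (auto intro!: sum_nonneg)
  then have A: "0 \<le> A" "A ^ p = SA" and B: "0 \<le> B" "B ^ p = SB"
    using p by (simp_all add: A_def B_def)
  consider "A = 0" | "B = 0" | "0 < A" "0 < B"
    using A B by linarith
  then show ?thesis
  proof cases
    case 1
    then have "SA = 0" using A p by auto
    then show ?thesis
      using power_sum_eq_if_power_sum_zero[OF fin p w a] 1 by (simp add: SA_def A_def SB_def)
  next
    case 2
    then have "SB = 0" using B p by auto
    then show ?thesis
      using power_sum_eq_if_power_sum_zero[OF fin p w b, where b = a] 2
      by (simp add: SB_def B_def add.commute)
  next
    case 3
    have "(\<Sum>i\<in>I. w i * (a i + b i) ^ p) \<le> (A + B) ^ p"
      using w a b 3 A B unfolding SA_def SB_def by (intro power_sum_add_le_power_add) auto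
    then have "root p (\<Sum>i\<in>I. w i * (a i + b i) ^ p) \<le> A + B"
      using real_root_le_mono[OF p] real_root_power_cancel[OF p] 3
      by (metis add_nonneg_nonneg less_eq_real_def)
    then show ?thesis by (simp add: A_def B_def SA_def SB_def)
  qed
qed

definition herm_power_norm ::
    "nat \<Rightarrow> 'i set \<Rightarrow> ('i \<Rightarrow> real) \<Rightarrow> ('i \<Rightarrow> complex ^ 'n) \<Rightarrow> complex ^ 'n \<Rightarrow> real" where
  "herm_power_norm p I w y z = (\<Sum>i\<in>I. w i * cmod (herm_inner z (y i)) ^ p) powr (1 / real p)"

lemma herm_power_norm_eq_root:
  assumes "0 < p" "\<And>i. i \<in> I \<Longrightarrow> 0 \<le> w i"
  shows "herm_power_norm p I w y z = root p (\<Sum>i\<in>I. w i * cmod (herm_inner z (y i)) ^ p)"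
  using assms by (simp add: herm_power_norm_def root_powr_inverse sum_nonneg)

lemma herm_power_norm_ge_term:
  assumes "finite I" "0 < p" "\<And>i. i \<in> I \<Longrightarrow> 0 \<le> w i" "j \<in> I"
  shows "root p (w j) * cmod (herm_inner z (y j)) \<le> herm_power_norm p I w y z"
proof -
  have "root p (w j) * cmod (herm_inner z (y j)) = root p (w j * cmod (herm_inner z (y j)) ^ p)"
    using assms by (simp add: real_root_mult real_root_power_cancel)
  also have "\<dots> \<le> root p (\<Sum>i\<in>I. w i * cmod (herm_inner z (y i)) ^ p)"
    using assms by (intro real_root_le_mono member_le_sum) auto
  finally show ?thesis
    using assms by (simp add: herm_power_norm_eq_root)
qed

lemma herm_power_norm_le:
  assumes "finite I" "0 < p" "\<And>i. i \<in> I \<Longrightarrow> 0 \<le> w i" "sum w I \<le> 1"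
    and "0 \<le> B" "\<And>i. i \<in> I \<Longrightarrow> cmod (herm_inner z (y i)) \<le> B"
  shows "herm_power_norm p I w y z \<le> B"
proof -
  have "(\<Sum>i\<in>I. w i * cmod (herm_inner z (y i)) ^ p) \<le> (\<Sum>i\<in>I. w i * B ^ p)"
    using assms by (intro sum_mono mult_left_mono power_mono) auto
  also have "\<dots> = sum w I * B ^ p"
    by (simp add: sum_distrib_right)
  also have "\<dots> \<le> B ^ p"
    using assms by (auto intro!: mult_left_le_one_le sum_nonneg)
  finally have "root p (\<Sum>i\<in>I. w i * cmod (herm_inner z (y i)) ^ p) \<le> root p (B ^ p)"
    using assms by (simp add: real_root_le_mono)
  then show ?thesis
    using assms by (simp add: herm_power_norm_eq_root real_root_power_cancel)
qed

lemma herm_power_norm_eq_0_iff: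
  assumes fin: "finite I" and p: "0 < p" and w: "\<And>i. i \<in> I \<Longrightarrow> 0 \<le> w i"
    and sep: "\<And>z. z \<noteq> 0 \<Longrightarrow> \<exists>i\<in>I. 0 < w i \<and> herm_inner z (y i) \<noteq> 0"
  shows "herm_power_norm p I w y z = 0 \<longleftrightarrow> z = 0"
proof
  assume zero: "herm_power_norm p I w y z = 0"
  show "z = 0"
  proof (rule ccontr)
    assume "z \<noteq> 0"
    then obtain i where i: "i \<in> I" "0 < w i" "herm_inner z (y i) \<noteq> 0"
      using sep by blast
    then have "0 < root p (w i) * cmod (herm_inner z (y i))"
      using p by simp
    also have "\<dots> \<le> herm_power_norm p I w y z"
      by (rule herm_power_norm_ge_term[OF fin p w i(1)])
    finally show False
      using zero by simp
  qed
next
  assume "z = 0"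
  then show "herm_power_norm p I w y z = 0"
    using p by (simp add: herm_power_norm_def zero_power)
qed

lemma herm_power_norm_triangle:
  assumes fin: "finite I" and p: "0 < p" and w: "\<And>i. i \<in> I \<Longrightarrow> 0 \<le> w i"
  shows "herm_power_norm p I w y (z + v) \<le> herm_power_norm p I w y z + herm_power_norm p I w y v"
proof -
  have "(\<Sum>i\<in>I. w i * cmod (herm_inner (z + v) (y i)) ^ p)
      \<le> (\<Sum>i\<in>I. w i * (cmod (herm_inner z (y i)) + cmod (herm_inner v (y i))) ^ p)"
    using w by (intro sum_mono mult_left_mono power_mono)
      (auto simp: herm_inner_add_left norm_triangle_ineq)
  then have "root p (\<Sum>i\<in>I. w i * cmod (herm_inner (z + v) (y i)) ^ p)
      \<le> root p (\<Sum>i\<in>I. w i * (cmod (herm_inner z (y i)) + cmod (herm_inner v (y i))) ^ p)"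
    using p by (simp add: real_root_le_mono)
  also have "\<dots> \<le> root p (\<Sum>i\<in>I. w i * cmod (herm_inner z (y i)) ^ p)
                  + root p (\<Sum>i\<in>I. w i * cmod (herm_inner v (y i)) ^ p)"
    by (rule root_power_sum_triangle[OF fin p w]) auto
  finally show ?thesis
    using p w by (simp add: herm_power_norm_eq_root)
qed

lemma herm_power_norm_scale:
  assumes p: "0 < p" and w: "\<And>i. i \<in> I \<Longrightarrow> 0 \<le> w i"
  shows "herm_power_norm p I w y (c *s z) = cmod c * herm_power_norm p I w y z"
proof -
  have "(\<Sum>i\<in>I. w i * cmod (herm_inner (c *s z) (y i)) ^ p)
      = cmod c ^ p * (\<Sum>i\<in>I. w i * cmod (herm_inner z (y i)) ^ p)"
    by (simp add: herm_inner_scale_left norm_mult power_mult_distrib sum_distrib_left algebra_simps)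
  then show ?thesis
    using p w by (simp add: herm_power_norm_eq_root real_root_mult real_root_power_cancel)
qed

lemma is_cnorm_herm_power_norm:
  assumes fin: "finite I" and p: "0 < p" and w: "\<And>i. i \<in> I \<Longrightarrow> 0 \<le> w i"
    and sep: "\<And>z. z \<noteq> 0 \<Longrightarrow> \<exists>i\<in>I. 0 < w i \<and> herm_inner z (y i) \<noteq> 0"
  shows "is_cnorm (herm_power_norm p I w y)"
  unfolding is_cnorm_def
proof (intro conjI allI)
  fix z v c
  show "0 \<le> herm_power_norm p I w y z"
    by (simp add: herm_power_norm_def)
  show "herm_power_norm p I w y z = 0 \<longleftrightarrow> z = 0"
    using fin p w sep by (rule herm_power_norm_eq_0_iff)
  show "herm_power_norm p I w y (z + v) \<le> herm_power_norm p I w y z + herm_power_norm p I w y v"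
    using fin p w by (rule herm_power_norm_triangle)
  show "herm_power_norm p I w y (c *s z) = cmod c * herm_power_norm p I w y z"
    using p w by (rule herm_power_norm_scale)
qed

lemma uniform_limit_sandwich_factor:
  fixes f :: "'b \<Rightarrow> 'a \<Rightarrow> real"
  assumes c: "(c \<longlongrightarrow> 1) F" and g: "bounded (g ` K)"
    and sandwich: "\<forall>\<^sub>F d in F. \<forall>z\<in>K. c d * g z \<le> f d z \<and> f d z \<le> g z"
  shows "uniform_limit K f g F"
proof (rule uniform_limitI)
  fix e :: real assume "0 < e"
  obtain B where B: "0 < B" "\<And>z. z \<in> K \<Longrightarrow> \<bar>g z\<bar> \<le> B"
    using g by (auto simp: bounded_pos)
  have "\<forall>\<^sub>F d in F. dist (c d) 1 < e / B"
    using tendstoD[OF c] \<open>0 < e\<close> B by simp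
  then show "\<forall>\<^sub>F d in F. \<forall>z\<in>K. dist (f d z) (g z) < e"
    using sandwich
  proof eventually_elim
    case (elim d)
    show ?case
    proof
      fix z assume z: "z \<in> K"
      have "dist (f d z) (g z) = g z - f d z"
        using elim z by (simp add: dist_real_def)
      also have "\<dots> \<le> (1 - c d) * g z"
        using elim z by (simp add: algebra_simps)
      also have "\<dots> \<le> \<bar>1 - c d\<bar> * \<bar>g z\<bar>"
        by (metis abs_ge_self abs_mult)
      also have "\<dots> \<le> \<bar>1 - c d\<bar> * B"
        using B z by (intro mult_left_mono) auto
      also have "\<dots> < e"
        using elim B by (simp add: dist_real_def abs_minus_commute pos_less_divide_eq)
      finally show "dist (f d z) (g z) < e" .
    qed
  qed
qed

lemma root_double_inverse_tendsto_1:
  fixes m :: "nat \<Rightarrow> nat"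
  assumes "\<forall>\<^sub>F d in sequentially. 1 \<le> m d \<and> m d \<le> d"
  shows "(\<lambda>d. root (2 * d) (1 / real (m d))) \<longlonglongrightarrow> 1"
proof (rule tendsto_sandwich[where f = "\<lambda>d. root (2 * d) (1 / real d)" and h = "\<lambda>_. 1"])
  show "\<forall>\<^sub>F d in sequentially. root (2 * d) (1 / real d) \<le> root (2 * d) (1 / real (m d))"
    using assms by eventually_elim (auto intro!: real_root_le_mono frac_le)
  show "\<forall>\<^sub>F d in sequentially. root (2 * d) (1 / real (m d)) \<le> 1"
    using assms by eventually_elim simp
  have "(\<lambda>d. (1 / real d) powr (1 / real (2 * d))) \<longlonglongrightarrow> 1"
    by real_asymp
  moreover have "\<forall>\<^sub>F d in sequentially. (1 / real d) powr (1 / real (2 * d)) = root (2 * d) (1 / real d)"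
    using eventually_gt_at_top[of "0::nat"] by eventually_elim (simp add: root_powr_inverse)
  ultimately show "(\<lambda>d. root (2 * d) (1 / real d)) \<longlonglongrightarrow> 1"
    using tendsto_cong by force
qed simp

lemma exists_filterlim_index_with_bound:
  fixes M :: "nat \<Rightarrow> nat"
  shows "\<exists>k. filterlim k at_top sequentially \<and> (\<forall>\<^sub>F d in sequentially. M (k d) \<le> d)"
proof -
  define k where "k d = Max {j. j \<le> d \<and> M j \<le> d}" for d
  have k: "j \<le> k d \<and> M (k d) \<le> d" if "j \<le> d" "M j \<le> d" for j d
  proof -
    define S where "S = {j. j \<le> d \<and> M j \<le> d}"
    have fin: "finite S" and j: "j \<in> S"
      using that by (simp_all add: S_def)
    have "k d \<in> S"
      unfolding k_def S_def[symmetric] using fin j by (intro Max_in) auto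
    moreover have "j \<le> k d"
      unfolding k_def S_def[symmetric] using fin j by (rule Max_ge)
    ultimately show ?thesis by (simp add: S_def)
  qed
  have "filterlim k at_top sequentially"
    unfolding filterlim_at_top
  proof
    fix j
    show "\<forall>\<^sub>F d in sequentially. j \<le> k d"
      using eventually_ge_at_top[of "max j (M j)"] by eventually_elim (metis k max.bounded_iff)
  qed
  moreover have "\<forall>\<^sub>F d in sequentially. M (k d) \<le> d"
    using eventually_ge_at_top[of "M 0"] by eventually_elim (metis k le0)
  ultimately show ?thesis by blast
qed

context
  fixes N :: "complex ^ 'n \<Rightarrow> real"
  assumes N: "is_cnorm N"
begin

lemma cnorm_nonneg: "0 \<le> N z"
  using N by (simp add: is_cnorm_def)

lemma cnorm_eq_0_iff: "N z = 0 \<longleftrightarrow> z = 0"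
  using N by (simp add: is_cnorm_def)

lemma cnorm_triangle: "N (z + v) \<le> N z + N v"
  using N by (simp add: is_cnorm_def)

lemma cnorm_scale: "N (c *s z) = cmod c * N z"
  using N by (simp add: is_cnorm_def)

lemma cnorm_zero [simp]: "N 0 = 0"
  by (simp add: cnorm_eq_0_iff)

lemma cnorm_pos: "z \<noteq> 0 \<Longrightarrow> 0 < N z"
  using cnorm_nonneg cnorm_eq_0_iff by (metis less_eq_real_def)

lemma cnorm_scaleR: "N (r *\<^sub>R z) = \<bar>r\<bar> * N z"
  by (simp add: scaleR_eq_scale_of_real cnorm_scale)

lemma cnorm_convex_comb:
  assumes "0 \<le> u" "0 \<le> v"
  shows "N (u *\<^sub>R x + v *\<^sub>R y) \<le> u * N x + v * N y"
  using cnorm_triangle[of "u *\<^sub>R x" "v *\<^sub>R y"] assms by (simp add: cnorm_scaleR)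

lemma continuous_on_cnorm: "continuous_on UNIV N"
proof (rule convex_on_continuous)
  show "convex_on UNIV N"
    by (rule convex_onI) (auto intro: cnorm_convex_comb)
qed simp

lemma convex_cnorm_le: "convex {x. N x \<le> c}"
proof (rule convexI)
  fix x y :: "complex ^ 'n" and u v :: real
  assume "x \<in> {x. N x \<le> c}" "y \<in> {x. N x \<le> c}" "0 \<le> u" "0 \<le> v" "u + v = 1"
  then have "N (u *\<^sub>R x + v *\<^sub>R y) \<le> u * c + v * c"
    using cnorm_convex_comb[of u v x y] mult_left_mono[of _ c] by (smt (verit) mem_Collect_eq)
  moreover have "u * c + v * c = c"
    using \<open>u + v = 1\<close> by (metis distrib_right mult_1)
  ultimately show "u *\<^sub>R x + v *\<^sub>R y \<in> {x. N x \<le> c}"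
    by simp
qed

lemma closed_cnorm_le: "closed {x. N x \<le> c}"
  by (rule closed_Collect_le[OF continuous_on_cnorm continuous_on_const])

lemma bounded_cnorm_image: "compact K \<Longrightarrow> bounded (N ` K)"
  by (intro compact_imp_bounded compact_continuous_image continuous_on_subset[OF continuous_on_cnorm])
    auto

text \<open>
  Multiplying \<open>x\<close> by a unimodular scalar makes \<open>\<langle>x,y\<rangle>\<close> real and positive, so a bound on the
  real part over the unit ball bounds the modulus everywhere.
\<close>
lemma cmod_herm_inner_le_cnorm:
  assumes Re_lt: "\<And>x. N x \<le> 1 \<Longrightarrow> Re (herm_inner x y) < 1"
  shows "cmod (herm_inner x y) \<le> N x"
proof (cases "herm_inner x y = 0")
  case True
  then show ?thesis by (simp add: cnorm_nonneg)
next
  case False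
  define h where "h = herm_inner x y"
  have "x \<noteq> 0"
    using False by auto
  then have Nx: "0 < N x"
    by (rule cnorm_pos)
  define u where "u = cnj h / of_real (cmod h * N x)"
  have "N (u *s x) = 1"
    using False Nx by (simp add: cnorm_scale u_def h_def norm_divide norm_mult)
  moreover have "herm_inner (u *s x) y = of_real (cmod h / N x)"
  proof -
    have "herm_inner (u *s x) y = cnj h * h / of_real (cmod h * N x)"
      by (simp add: herm_inner_scale_left u_def h_def)
    also have "cnj h * h = of_real (cmod h ^ 2)"
      by (metis complex_norm_square mult.commute)
    finally show ?thesis
      using False Nx by (simp add: power2_eq_square h_def)
  qed
  ultimately have "cmod h / N x < 1"
    using Re_lt[of "u *s x"] by simp
  then show ?thesis
    using Nx by (simp add: h_def field_simps)
qed

lemma cnorm_le_herm_inner_scaleR: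
  assumes "r * N u \<le> cmod (herm_inner u y)"
  shows "r * N (s *\<^sub>R u) \<le> cmod (herm_inner (s *\<^sub>R u) y)"
proof -
  have "r * N (s *\<^sub>R u) = \<bar>s\<bar> * (r * N u)"
    by (simp add: cnorm_scaleR mult.left_commute)
  also have "\<dots> \<le> \<bar>s\<bar> * cmod (herm_inner u y)"
    using assms by (rule mult_left_mono) simp
  also have "\<dots> = cmod (herm_inner (s *\<^sub>R u) y)"
    by (simp add: herm_inner_scaleR_left norm_mult)
  finally show ?thesis .
qed

lemma cnorm_dual_functional:
  assumes z: "z \<noteq> 0" and r: "0 < r" "r < 1"
  shows "\<exists>y. (\<forall>x. cmod (herm_inner x y) \<le> N x) \<and> r * N z < cmod (herm_inner z y)"
proof -
  define B where "B = {x. N x \<le> 1}"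
  have Nz: "0 < N z"
    using z by (rule cnorm_pos)
  define t where "t = 1 / (r * N z)"
  have t: "0 < t"
    using Nz r by (simp add: t_def)
  have "N (t *\<^sub>R z) = 1 / r"
    using t Nz by (simp add: cnorm_scaleR t_def)
  moreover have "1 < 1 / r"
    using r by (simp add: field_simps)
  ultimately have "t *\<^sub>R z \<notin> B"
    by (simp add: B_def)
  then obtain a b where ab: "inner a (t *\<^sub>R z) < b" "\<forall>x\<in>B. b < inner a x"
    using separating_hyperplane_closed_point[OF convex_cnorm_le closed_cnorm_le] unfolding B_def
    by blast
  have "0 \<in> B"
    by (simp add: B_def)
  then have b: "b < 0"
    using ab(2) by force
  define y where "y = (1 / b) *\<^sub>R a"
  have Re_y: "Re (herm_inner x y) = inner a x / b" for x
    by (simp add: y_def inner_eq_Re_herm_inner[symmetric] inner_commute)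
  have "Re (herm_inner x y) < 1" if "N x \<le> 1" for x
    using ab(2) that b by (simp add: Re_y B_def neg_divide_less_eq)
  then have bound: "cmod (herm_inner x y) \<le> N x" for x
    by (rule cmod_herm_inner_le_cnorm)
  have "1 < Re (herm_inner (t *\<^sub>R z) y)"
    using ab(1) b by (simp add: Re_y neg_less_divide_eq)
  also have "\<dots> \<le> t * cmod (herm_inner z y)"
    using t by (simp add: herm_inner_scaleR_left mult_left_mono complex_Re_le_cmod)
  finally have "r * N z < cmod (herm_inner z y)"
    using Nz r by (simp add: t_def field_simps)
  with bound show ?thesis by blast
qed

lemma cnorm_finite_dual_family:
  assumes r: "0 < r" "r < 1"
  shows "\<exists>(M :: nat) Y. (\<forall>i\<in>{1..M}. \<forall>x. cmod (herm_inner x (Y i)) \<le> N x)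
                \<and> (\<forall>x. \<exists>i\<in>{1..M}. r * N x \<le> cmod (herm_inner x (Y i)))"
proof -
  define dual where "dual = {y. \<forall>x. cmod (herm_inner x y) \<le> N x}"
  define U where "U y = {x. r * N x < cmod (herm_inner x y)}" for y
  have "open (U y)" for y
    unfolding U_def
    by (intro open_Collect_less continuous_intros continuous_on_cnorm continuous_on_norm
        continuous_on_herm_inner_left)
  moreover have "sphere 0 1 \<subseteq> (\<Union>y\<in>dual. U y)"
  proof
    fix z :: "complex ^ 'n" assume "z \<in> sphere 0 1"
    then have "z \<noteq> 0" by auto
    then show "z \<in> (\<Union>y\<in>dual. U y)"
      using cnorm_dual_functional[OF _ r] by (auto simp: dual_def U_def)
  qed
  ultimately obtain D where D: "D \<subseteq> dual" "finite D" "sphere 0 1 \<subseteq> (\<Union>y\<in>D. U y)"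
    using compactE_image[OF compact_sphere] by metis
  obtain Y where Y: "bij_betw Y {1..card D} D"
    using ex_bij_betw_nat_finite_1[OF D(2)] by blast
  have "sphere (0 :: complex ^ 'n) 1 \<noteq> {}"
    by simp
  then obtain u0 :: "complex ^ 'n" where u0: "u0 \<in> sphere 0 1"
    by blast
  have "\<exists>i\<in>{1..card D}. r * N x \<le> cmod (herm_inner x (Y i))" for x
  proof -
    have "\<exists>u s. u \<in> sphere 0 1 \<and> x = s *\<^sub>R u"
    proof (cases "x = 0")
      case True
      then show ?thesis using u0 by (intro exI[of _ u0] exI[of _ 0]) simp
    next
      case False
      then show ?thesis by (intro exI[of _ "(1 / norm x) *\<^sub>R x"] exI[of _ "norm x"]) simp
    qed
    then obtain u s where u: "u \<in> sphere 0 1" and x: "x = s *\<^sub>R u"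
      by blast
    then obtain y where y: "y \<in> D" "u \<in> U y"
      using D(3) by blast
    then obtain i where i: "i \<in> {1..card D}" "u \<in> U (Y i)"
      using Y by (metis bij_betw_imp_surj_on imageE)
    then have "r * N u \<le> cmod (herm_inner u (Y i))"
      by (simp add: U_def)
    then show ?thesis
      using i(1) unfolding x by (blast intro: cnorm_le_herm_inner_scaleR)
  qed
  moreover have "\<forall>i\<in>{1..card D}. \<forall>x. cmod (herm_inner x (Y i)) \<le> N x"
    using Y D(1) by (auto simp: dual_def bij_betw_def)
  ultimately show ?thesis by blast
qed

lemma herm_power_norm_of_dual_family:
  assumes r: "0 < r" and p: "0 < p"
    and bound: "\<And>i x. i \<in> {1..M} \<Longrightarrow> cmod (herm_inner x (Y i)) \<le> N x"
    and cover: "\<And>x. \<exists>i\<in>{1..M}. r * N x \<le> cmod (herm_inner x (Y i))"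
  shows "is_cnorm (herm_power_norm p {1..M} (\<lambda>_. 1 / real M) Y)"
    and "herm_power_norm p {1..M} (\<lambda>_. 1 / real M) Y z \<le> N z"
    and "root p (1 / real M) * r * N z \<le> herm_power_norm p {1..M} (\<lambda>_. 1 / real M) Y z"
proof -
  have M: "1 \<le> M"
    using cover[of 0] by auto
  show "is_cnorm (herm_power_norm p {1..M} (\<lambda>_. 1 / real M) Y)"
  proof (rule is_cnorm_herm_power_norm)
    fix z :: "complex ^ 'n" assume "z \<noteq> 0"
    then have "0 < r * N z"
      using r by (simp add: cnorm_pos)
    then show "\<exists>i\<in>{1..M}. 0 < 1 / real M \<and> herm_inner z (Y i) \<noteq> 0"
      using cover[of z] M by force
  qed (use p in auto)
  show "herm_power_norm p {1..M} (\<lambda>_. 1 / real M) Y z \<le> N z"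
    using M p bound by (intro herm_power_norm_le) (auto simp: cnorm_nonneg)
  obtain i where i: "i \<in> {1..M}" "r * N z \<le> cmod (herm_inner z (Y i))"
    using cover by blast
  have "root p (1 / real M) * r * N z \<le> root p (1 / real M) * cmod (herm_inner z (Y i))"
    unfolding mult.assoc by (rule mult_left_mono[OF i(2)]) (simp add: real_root_ge_zero)
  also have "\<dots> \<le> herm_power_norm p {1..M} (\<lambda>_. 1 / real M) Y z"
    using i(1) p by (intro herm_power_norm_ge_term) auto
  finally show "root p (1 / real M) * r * N z \<le> herm_power_norm p {1..M} (\<lambda>_. 1 / real M) Y z" .
qed

lemma cnorm_dual_families:
  obtains r :: "nat \<Rightarrow> real" and M :: "nat \<Rightarrow> nat" and Y :: "nat \<Rightarrow> nat \<Rightarrow> complex ^ 'n"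
  where "r \<longlonglongrightarrow> 1" "\<And>j. 0 < r j"
    and "\<And>j i x. i \<in> {1..M j} \<Longrightarrow> cmod (herm_inner x (Y j i)) \<le> N x"
    and "\<And>j x. \<exists>i\<in>{1..M j}. r j * N x \<le> cmod (herm_inner x (Y j i))"
proof -
  define r :: "nat \<Rightarrow> real" where "r j = 1 - 1 / (real j + 2)" for j
  have r: "0 < r j" "r j < 1" for j
    by (auto simp: r_def field_simps)
  have "r \<longlonglongrightarrow> 1"
    unfolding r_def by real_asymp
  have "\<forall>j. \<exists>(M :: nat) Y. (\<forall>i\<in>{1..M}. \<forall>x. cmod (herm_inner x (Y i)) \<le> N x)
                \<and> (\<forall>x. \<exists>i\<in>{1..M}. r j * N x \<le> cmod (herm_inner x (Y i)))"
    using cnorm_finite_dual_family[OF r] by blast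
  then show ?thesis
    using that \<open>r \<longlonglongrightarrow> 1\<close> r(1) unfolding choice_iff by blast
qed

lemma cnorm_power_norm_approximants:
  obtains M :: "nat \<Rightarrow> nat" and Y :: "nat \<Rightarrow> nat \<Rightarrow> complex ^ 'n" and c :: "nat \<Rightarrow> real"
  where "\<And>d. 1 \<le> M d"
    and "\<And>d. 1 \<le> d \<Longrightarrow> is_cnorm (herm_power_norm (2 * d) {1..M d} (\<lambda>_. 1 / real (M d)) (Y d))"
    and "\<And>d z. 1 \<le> d \<Longrightarrow> herm_power_norm (2 * d) {1..M d} (\<lambda>_. 1 / real (M d)) (Y d) z \<le> N z"
    and "\<And>d z. 1 \<le> d \<Longrightarrow> c d * N z \<le> herm_power_norm (2 * d) {1..M d} (\<lambda>_. 1 / real (M d)) (Y d) z"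
    and "c \<longlonglongrightarrow> 1"
proof -
  obtain r and M :: "nat \<Rightarrow> nat" and Y :: "nat \<Rightarrow> nat \<Rightarrow> complex ^ 'n"
    where r: "r \<longlonglongrightarrow> 1" "\<And>j. 0 < r j"
    and bound: "\<And>j i x. i \<in> {1..M j} \<Longrightarrow> cmod (herm_inner x (Y j i)) \<le> N x"
    and cover: "\<And>j x. \<exists>i\<in>{1..M j}. r j * N x \<le> cmod (herm_inner x (Y j i))"
    using cnorm_dual_families by blast
  have M: "1 \<le> M j" for j
    using cover[of j 0] by auto
  obtain k where k: "filterlim k at_top sequentially" "\<forall>\<^sub>F d in sequentially. M (k d) \<le> d"
    using exists_filterlim_index_with_bound by blast
  define c where "c d = root (2 * d) (1 / real (M (k d))) * r (k d)" for d
  have "(\<lambda>d. root (2 * d) (1 / real (M (k d)))) \<longlonglongrightarrow> 1"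
    using k(2) M by (intro root_double_inverse_tendsto_1) simp
  moreover have "(\<lambda>d. r (k d)) \<longlonglongrightarrow> 1"
    using r(1) k(1) by (rule filterlim_compose)
  ultimately have "c \<longlonglongrightarrow> 1 * 1"
    unfolding c_def by (rule tendsto_mult)
  moreover have "is_cnorm (herm_power_norm (2 * d) {1..M (k d)} (\<lambda>_. 1 / real (M (k d))) (Y (k d)))"
    and "herm_power_norm (2 * d) {1..M (k d)} (\<lambda>_. 1 / real (M (k d))) (Y (k d)) z \<le> N z"
    and "c d * N z \<le> herm_power_norm (2 * d) {1..M (k d)} (\<lambda>_. 1 / real (M (k d))) (Y (k d)) z"
    if "1 \<le> d" for d z
    unfolding c_def using herm_power_norm_of_dual_family[OF r(2) _ bound cover, where p = "2 * d"] that
    by auto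
  ultimately show ?thesis
    using M by (intro that[of "\<lambda>d. M (k d)" "\<lambda>d. Y (k d)" c]) auto
qed

end

theorem theorem4p5:
  fixes nrm :: "complex ^ 'n \<Rightarrow> real"
  assumes "is_cnorm nrm"
  shows "\<exists>(N :: nat \<Rightarrow> nat) (w :: nat \<Rightarrow> nat \<Rightarrow> real) (y :: nat \<Rightarrow> nat \<Rightarrow> complex ^ 'n).
    (\<forall>d\<ge>1. \<forall>i\<in>{1..N d}. 0 < w d i) \<and>
    (\<forall>d\<ge>1. is_cnorm (\<lambda>z. (\<Sum>i=1..N d. w d i * cmod (herm_inner z (y d i)) ^ (2*d)) powr (1 / real (2*d)))) \<and>
    (\<forall>d\<ge>1. \<forall>z. (\<Sum>i=1..N d. w d i * cmod (herm_inner z (y d i)) ^ (2*d)) powr (1 / real (2*d)) \<le> nrm z) \<and>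
    (\<forall>K. compact K \<longrightarrow>
       uniform_limit K (\<lambda>d z. (\<Sum>i=1..N d. w d i * cmod (herm_inner z (y d i)) ^ (2*d)) powr (1 / real (2*d))) nrm sequentially)"
proof -
  obtain M Y c where M: "\<And>d. 1 \<le> M d"
    and norm: "\<And>d. 1 \<le> d \<Longrightarrow> is_cnorm (herm_power_norm (2 * d) {1..M d} (\<lambda>_. 1 / real (M d)) (Y d))"
    and upper: "\<And>d z. 1 \<le> d \<Longrightarrow> herm_power_norm (2 * d) {1..M d} (\<lambda>_. 1 / real (M d)) (Y d) z \<le> nrm z"
    and lower: "\<And>d z. 1 \<le> d \<Longrightarrow> c d * nrm z \<le> herm_power_norm (2 * d) {1..M d} (\<lambda>_. 1 / real (M d)) (Y d) z"
    and c: "c \<longlonglongrightarrow> 1"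
    using cnorm_power_norm_approximants[OF assms] by blast
  have "uniform_limit K (\<lambda>d. herm_power_norm (2 * d) {1..M d} (\<lambda>_. 1 / real (M d)) (Y d)) nrm sequentially"
    if "compact K" for K
    by (intro uniform_limit_sandwich_factor[OF c bounded_cnorm_image[OF assms that]]
        eventually_mono[OF eventually_ge_at_top[of 1]] ballI conjI lower upper)
  then show ?thesis
    using M norm upper unfolding herm_power_norm_def
    by (intro exI[of _ M] exI[of _ "\<lambda>d i. 1 / real (M d)"] exI[of _ Y]) auto
qed

end
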